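(* Let $\psi:\mathbb{R}\to\mathbb{C}$ be a unit-energy continuous wavelet that is an eigenfunction of the Fourier transform (an "isoresolution wavelet"), i.e. there is $\lambda\in\mathbb{C}$ with $|\lambda|=\sqrt{2\pi}$ such that $\Psi(\omega)=\lambda\,\psi(\omega)$ for all $\omega\in\mathbb{R}$, and suppose $H_t(\psi)$ is finite. Then $H_t(\psi)=H_f(\psi)$.
   Context: The Fourier transform is $\Psi(\omega)=\int_{-\infty}^{+\infty}\psi(t)e^{-j\omega t}\,dt$. For a unit-energy wavelet, the time entropy is $H_t(\psi):=-\int_{-\infty}^{+\infty}|\psi(t)|^2\log_2|\psi(t)|^2\,dt$ and the frequency entropy is $H_f(\psi):=-\int_{-\infty}^{+\infty}\frac{1}{2\pi}|\Psi(\omega)|^2\log_2\!\left(\frac{1}{2\pi}|\Psi(\omega)|^2\right)d\omega$. *)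

theory Defs
  imports "HOL-Analysis.Analysis"
begin

definition fourier :: "(real \<Rightarrow> complex) \<Rightarrow> real \<Rightarrow> complex" where
  "fourier \<psi> \<omega> = integral\<^sup>L lborel (\<lambda>t. \<psi> t * exp (- (\<i> * complex_of_real (\<omega> * t))))"

definition unit_energy :: "(real \<Rightarrow> complex) \<Rightarrow> bool" where
  "unit_energy \<psi> \<longleftrightarrow> integrable lborel (\<lambda>t. (cmod (\<psi> t))\<^sup>2) \<and>
     integral\<^sup>L lborel (\<lambda>t. (cmod (\<psi> t))\<^sup>2) = 1"

definition admissible :: "(real \<Rightarrow> complex) \<Rightarrow> bool" where
  "admissible \<psi> \<longleftrightarrow> integrable lborel (\<lambda>\<omega>. (cmod (fourier \<psi> \<omega>))\<^sup>2 / \<bar>\<omega>\<bar>)"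

definition time_entropy :: "(real \<Rightarrow> complex) \<Rightarrow> real" where
  "time_entropy \<psi> = - integral\<^sup>L lborel (\<lambda>t. (cmod (\<psi> t))\<^sup>2 * log 2 ((cmod (\<psi> t))\<^sup>2))"

definition freq_entropy :: "(real \<Rightarrow> complex) \<Rightarrow> real" where
  "freq_entropy \<psi> = - integral\<^sup>L lborel (\<lambda>\<omega>.
      (1 / (2 * pi)) * (cmod (fourier \<psi> \<omega>))\<^sup>2 * log 2 ((1 / (2 * pi)) * (cmod (fourier \<psi> \<omega>))\<^sup>2))"

definition time_entropy_finite :: "(real \<Rightarrow> complex) \<Rightarrow> bool" where
  "time_entropy_finite \<psi> \<longleftrightarrow>
     integrable lborel (\<lambda>t. (cmod (\<psi> t))\<^sup>2 * log 2 ((cmod (\<psi> t))\<^sup>2))"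

end

theory Submission
  imports Defs
begin

text \<open>For an eigenfunction of the Fourier transform with \<open>|\<lambda>|\<^sup>2 = 2\<pi>\<close>, the normalised
  spectral density \<open>|\<Psi>(\<omega>)|\<^sup>2 / 2\<pi>\<close> coincides pointwise with the time density
  \<open>|\<psi>(\<omega>)|\<^sup>2\<close>, so the two entropy integrals have the same integrand.\<close>

lemma spectral_density_eq_time_density:
  assumes "cmod lam = sqrt (2 * pi)"
    and "\<And>\<omega>. fourier \<psi> \<omega> = lam * \<psi> \<omega>"
  shows "(1 / (2 * pi)) * (cmod (fourier \<psi> \<omega>))\<^sup>2 = (cmod (\<psi> \<omega>))\<^sup>2"
proof -
  have "(cmod (fourier \<psi> \<omega>))\<^sup>2 = (cmod lam)\<^sup>2 * (cmod (\<psi> \<omega>))\<^sup>2"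
    by (simp add: assms(2) norm_mult power_mult_distrib)
  also have "(cmod lam)\<^sup>2 = 2 * pi"
    using assms(1) by simp
  finally show ?thesis
    by simp
qed

lemma freq_entropy_eq_time_entropy_if_densities_eq:
  assumes "\<And>\<omega>. (1 / (2 * pi)) * (cmod (fourier \<psi> \<omega>))\<^sup>2 = (cmod (\<psi> \<omega>))\<^sup>2"
  shows "freq_entropy \<psi> = time_entropy \<psi>"
  unfolding time_entropy_def freq_entropy_def assms ..

theorem proposition4:
  fixes \<psi> :: "real \<Rightarrow> complex" and lam :: complex
  assumes cont: "continuous_on UNIV \<psi>"
    and int: "integrable lborel \<psi>"
    and energy: "unit_energy \<psi>"
    and adm: "admissible \<psi>"
    and lam_abs: "cmod lam = sqrt (2 * pi)"
    and eig: "\<And>\<omega>. fourier \<psi> \<omega> = lam * \<psi> \<omega>"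
    and fin: "time_entropy_finite \<psi>"
  shows "time_entropy \<psi> = freq_entropy \<psi>"
  using freq_entropy_eq_time_entropy_if_densities_eq
    spectral_density_eq_time_density[OF lam_abs eig] by simp

end
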